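(* Assume $D$ has at least one arc. The largest number of nodes $|W|$ over subsystem states $\psi^A_W$ belonging to $M_E$ equals the number of nodes of the largest transmission block of $D$; if $D$ has no transmission block, this maximum equals $2$.
   Context: $D=(V,A)$ is a directed graph on $V=\{1,\dots,N\}$ with rates $T_{ij}\ge0$, $T_{ij}>0$ iff $(j,i)\in A$, $T_{ii}=0$. A subsystem state is a pair $(W,A)$ with $W\subseteq V$ nonempty and $A:W\to\{S,I,R\}$, written $\psi^A_W$; $S_i$, $I_i$ denote the single-node states, and for $n\notin W$, $\psi^A_WI_n$ denotes the state on $W\cup\{n\}$ agreeing with $A$ on $W$ and with $n$ in state $I$. For $k\in W$, $h^X_k(\psi^A_W)$ is the state obtained by changing the state of $k$ to $X$. $\mathrm{IN}(X)$ is the set of nodes from which some member of $X$ is reachable by a directed path; for disjoint nonempty $X,Y,Z$, $f_E(X,Y,Z)=1$ iff $\mathrm{IN}(X)\cap\mathrm{IN}(Y)=\emptyset$ in $D-Z$, else $0$; by convention $f_E(\{n\},\emptyset,\{k\})=0$. Induced set: for a state $\psi^A_W$ with $A:W\to\{S,I\}$, the states it induces are (i) $\psi^A_W$ itself and $h^S_k(\psi^A_W)$ for each $k\in W$ with $A_k=I$ such that $T_{kn}>0$ for some $n\in W$ with $A_n=I$; (ii) for each $k\in W$ and $n\in V\setminus W$ with $T_{kn}>0$: if $f_E(\{n\},W\setminus\{k\},\{k\})=0$, the state $h^S_k(\psi^A_W)I_n$; if it equals $1$, the states $h^S_k(\psi^A_W)$, $S_kI_n$ and $S_k$. $M_E$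 is the smallest set of subsystem states containing $S_i$ and $I_i$ for all $i\in V$ and closed under taking induced states (these are exactly the states appearing in the exact closed moment equations for Markovian SIR dynamics obtained using the closure $\langle\psi^A_WI_n\rangle=\langle\psi^A_W\rangle\langle S_kI_n\rangle/\langle S_k\rangle$ wherever $f_E=1$). For $W\subseteq V$, $D[W]$ is the subgraph with node set $W$ and all arcs of $D$ with both endpoints in $W$. A graph is biconnected if it has at least three vertices, is connected, and stays connected after deleting any single vertex. $D[W]$ is a directed sub-block if some node of $W$ is reachable by a directed path within $D[W]$ from every other node of $W$, and the underlying undirected graph of $D[W]$ is biconnected. $D[W]$ is a transmission block if it is a directed sub-block and there is no $U\supsetneq W$ with $D[U]$ a directed sub-block. *)

theory Defs
  imports Complex_Main
begin

datatype st = S | I | R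

text \<open>A subsystem state psi^A_W is a finite map with domain W.\<close>
type_synonym state = "nat \<Rightarrow> st option"

definition V :: "nat \<Rightarrow> nat set" where
  "V N = {1..N}"

text \<open>Arc (j,i) of D, i.e. j -> i, iff T i j > 0 (both endpoints in V).\<close>
definition arc :: "nat \<Rightarrow> (nat \<Rightarrow> nat \<Rightarrow> real) \<Rightarrow> nat \<Rightarrow> nat \<Rightarrow> bool" where
  "arc N T j i \<longleftrightarrow> j \<in> V N \<and> i \<in> V N \<and> T i j > 0"

definition arcs_in :: "nat \<Rightarrow> (nat \<Rightarrow> nat \<Rightarrow> real) \<Rightarrow> nat set \<Rightarrow> (nat \<times> nat) set" where
  "arcs_in N T U = {(j, i). j \<in> U \<and> i \<in> U \<and> arc N T j i}"

definition IN :: "nat \<Rightarrow> (nat \<Rightarrow> nat \<Rightarrow> real) \<Rightarrow> nat set \<Rightarrow> nat set \<Rightarrow> nat set" where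
  "IN N T Z X = {u \<in> V N - Z. \<exists>x\<in>X. (u, x) \<in> (arcs_in N T (V N - Z))\<^sup>*}"

text \<open>f_E(X,Y,Z); with the convention f_E({n},{},{k}) = 0 (Y empty gives 0).\<close>
definition fE :: "nat \<Rightarrow> (nat \<Rightarrow> nat \<Rightarrow> real) \<Rightarrow> nat set \<Rightarrow> nat set \<Rightarrow> nat set \<Rightarrow> bool" where
  "fE N T X Y Z \<longleftrightarrow> Y \<noteq> {} \<and> IN N T Z X \<inter> IN N T Z Y = {}"

definition induced :: "nat \<Rightarrow> (nat \<Rightarrow> nat \<Rightarrow> real) \<Rightarrow> state \<Rightarrow> state set" where
  "induced N T \<psi> =
     {\<psi>}
   \<union> {\<psi>(k \<mapsto> S) | k. k \<in> dom \<psi> \<and> \<psi> k = Some I \<and>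
                        (\<exists>n\<in>dom \<psi>. \<psi> n = Some I \<and> T k n > 0)}
   \<union> {\<psi>(k \<mapsto> S, n \<mapsto> I) | k n. k \<in> dom \<psi> \<and> n \<in> V N - dom \<psi> \<and> T k n > 0 \<and>
                        \<not> fE N T {n} (dom \<psi> - {k}) {k}}
   \<union> \<Union> {{\<psi>(k \<mapsto> S), [k \<mapsto> S, n \<mapsto> I], [k \<mapsto> S]} | k n.
                        k \<in> dom \<psi> \<and> n \<in> V N - dom \<psi> \<and> T k n > 0 \<and>
                        fE N T {n} (dom \<psi> - {k}) {k}}"

inductive_set ME :: "nat \<Rightarrow> (nat \<Rightarrow> nat \<Rightarrow> real) \<Rightarrow> state set" for N T where
  single_S: "i \<in> V N \<Longrightarrow> [i \<mapsto> S] \<in> ME N T"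
| single_I: "i \<in> V N \<Longrightarrow> [i \<mapsto> I] \<in> ME N T"
| induce: "\<psi> \<in> ME N T \<Longrightarrow> ran \<psi> \<subseteq> {S, I} \<Longrightarrow> \<phi> \<in> induced N T \<psi> \<Longrightarrow> \<phi> \<in> ME N T"

definition und_edges :: "nat \<Rightarrow> (nat \<Rightarrow> nat \<Rightarrow> real) \<Rightarrow> nat set \<Rightarrow> (nat \<times> nat) set" where
  "und_edges N T U = {(u, v). u \<in> U \<and> v \<in> U \<and> (arc N T u v \<or> arc N T v u)}"

definition und_connected :: "nat \<Rightarrow> (nat \<Rightarrow> nat \<Rightarrow> real) \<Rightarrow> nat set \<Rightarrow> bool" where
  "und_connected N T U \<longleftrightarrow> (\<forall>u\<in>U. \<forall>v\<in>U. (u, v) \<in> (und_edges N T U)\<^sup>*)"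

definition und_biconnected :: "nat \<Rightarrow> (nat \<Rightarrow> nat \<Rightarrow> real) \<Rightarrow> nat set \<Rightarrow> bool" where
  "und_biconnected N T U \<longleftrightarrow> finite U \<and> card U \<ge> 3 \<and> und_connected N T U \<and>
     (\<forall>x\<in>U. und_connected N T (U - {x}))"

definition directed_subblock :: "nat \<Rightarrow> (nat \<Rightarrow> nat \<Rightarrow> real) \<Rightarrow> nat set \<Rightarrow> bool" where
  "directed_subblock N T W \<longleftrightarrow> W \<subseteq> V N \<and>
     (\<exists>r\<in>W. \<forall>u\<in>W. (u, r) \<in> (arcs_in N T W)\<^sup>*) \<and> und_biconnected N T W"

definition transmission_block :: "nat \<Rightarrow> (nat \<Rightarrow> nat \<Rightarrow> real) \<Rightarrow> nat set \<Rightarrow> bool" where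
  "transmission_block N T W \<longleftrightarrow> directed_subblock N T W \<and>
     \<not> (\<exists>U. W \<subset> U \<and> directed_subblock N T U)"

end

theory Submission
  imports Defs
begin

text \<open>The domain of a state grows only by a node \<open>n\<close> attached by an arc \<open>n \<rightarrow> k\<close> with \<open>f_E = 0\<close>;
  otherwise it stays the same or collapses to a single node or a single arc. With \<open>f_E = 0\<close> some
  node reaches, avoiding \<open>k\<close>, both \<open>n\<close> and another node of the domain. The walks involved form an
  ear whose minimal version enlarges any directed sub-block containing the domain to one that also
  contains \<open>n\<close>. So every domain has at most two nodes or lies in a transmission block.

  Conversely, let \<open>W\<close> be a directed sub-block rooted at \<open>r\<close> and \<open>r \<in> X \<subset> W\<close>. If every arc
  entering \<open>X\<close> had \<open>f_E = 1\<close>, the nodes of \<open>W - X\<close> draining into an in-neighbour \<open>k \<in> X\<close> would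
  form a union of components of \<open>W - k\<close> missing \<open>X - k\<close>, contradicting biconnectivity. Hence
  domains can be grown inside \<open>W\<close> from \<open>{r}\<close> until they fill \<open>W\<close>.\<close>

lemma arcs_in_rtrancl_mono:
  "(a, b) \<in> (arcs_in N T U)\<^sup>* \<Longrightarrow> U \<subseteq> U' \<Longrightarrow> (a, b) \<in> (arcs_in N T U')\<^sup>*"
  by (rule rtrancl_mono[THEN subsetD]) (auto simp: arcs_in_def)

lemma und_edges_rtrancl_mono:
  "(a, b) \<in> (und_edges N T U)\<^sup>* \<Longrightarrow> U \<subseteq> U' \<Longrightarrow> (a, b) \<in> (und_edges N T U')\<^sup>*"
  by (rule rtrancl_mono[THEN subsetD]) (auto simp: und_edges_def)

lemma und_edges_rtrancl_sym:
  "(a, b) \<in> (und_edges N T U)\<^sup>* \<Longrightarrow> (b, a) \<in> (und_edges N T U)\<^sup>*"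
proof -
  have "(und_edges N T U)\<inverse> = und_edges N T U" by (auto simp: und_edges_def)
  then show "(a, b) \<in> (und_edges N T U)\<^sup>* \<Longrightarrow> ?thesis"
    by (metis converse_iff rtrancl_converse)
qed

lemma arcs_in_rtrancl_und_edges:
  "(a, b) \<in> (arcs_in N T U)\<^sup>* \<Longrightarrow> (a, b) \<in> (und_edges N T U)\<^sup>*"
  by (rule rtrancl_mono[THEN subsetD]) (auto simp: arcs_in_def und_edges_def)

lemma arcs_in_rtrancl_closed: "(a, b) \<in> (arcs_in N T U)\<^sup>* \<Longrightarrow> a \<in> U \<Longrightarrow> b \<in> U"
  by (induction rule: rtrancl_induct) (auto simp: arcs_in_def)

lemma und_edges_rtrancl_closed: "(a, b) \<in> (und_edges N T U)\<^sup>* \<Longrightarrow> a \<in> U \<Longrightarrow> b \<in> U"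
  by (induction rule: rtrancl_induct) (auto simp: und_edges_def)

lemma arcs_in_Int: "arcs_in N T U \<inter> Q \<times> Q = arcs_in N T (U \<inter> Q)"
  by (auto simp: arcs_in_def)

lemma rtrancl_restrict_between:
  assumes "(a, b) \<in> E\<^sup>*" and "\<And>v. (a, v) \<in> E\<^sup>* \<Longrightarrow> (v, b) \<in> E\<^sup>* \<Longrightarrow> v \<in> Q"
  shows "(a, b) \<in> (E \<inter> Q \<times> Q)\<^sup>*"
  using assms
proof (induction rule: converse_rtrancl_induct)
  case base
  then show ?case by simp
next
  case (step y z)
  have "(z, b) \<in> (E \<inter> Q \<times> Q)\<^sup>*"
    using step by (meson converse_rtrancl_into_rtrancl)
  moreover have "y \<in> Q" "z \<in> Q"
    using step by (auto intro: converse_rtrancl_into_rtrancl)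
  ultimately show ?case
    using step.hyps(1) by (meson IntI SigmaI converse_rtrancl_into_rtrancl)
qed

text \<open>If the only way into and out of \<open>C\<close> passes through \<open>x \<notin> C\<close>, every excursion of a walk
  into \<open>C\<close> can be cut out, since it starts and ends at \<open>x\<close>.\<close>

lemma rtrancl_bypass:
  assumes "(a, b) \<in> E\<^sup>*" "a \<notin> C" "b \<notin> C" "x \<notin> C"
    and leave: "\<And>c y. c \<in> C \<Longrightarrow> (c, y) \<in> E \<Longrightarrow> y \<in> C \<or> y = x"
    and enter: "\<And>y c. (y, c) \<in> E \<Longrightarrow> c \<in> C \<Longrightarrow> y \<in> C \<or> y = x"
  shows "(a, b) \<in> (E \<inter> (- C) \<times> (- C))\<^sup>*"
proof -
  let ?E' = "E \<inter> (- C) \<times> (- C)"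
  have "(a \<notin> C \<longrightarrow> (a, b) \<in> ?E'\<^sup>*) \<and> (a \<in> C \<longrightarrow> (x, b) \<in> ?E'\<^sup>*)"
    using assms(1)
  proof (induction rule: converse_rtrancl_induct)
    case base
    then show ?case using assms(3) by simp
  next
    case (step y z)
    show ?case
    proof (cases "y \<in> C")
      case True
      then show ?thesis using step leave[OF True step.hyps(1)] by auto
    next
      case y: False
      show ?thesis
      proof (cases "z \<in> C")
        case True
        then show ?thesis using step enter[OF step.hyps(1)] y by auto
      next
        case False
        then show ?thesis using step y by (auto intro: converse_rtrancl_into_rtrancl)
      qed
    qed
  qed
  then show ?thesis using assms(2) by blast
qed

lemma finite_V: "finite (V N)"
  by (simp add: V_def)

lemma und_connected_attach:
  assumes "H \<subseteq> U" "und_connected N T H"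
    and "\<And>a. a \<in> U \<Longrightarrow> \<exists>h\<in>H. (a, h) \<in> (und_edges N T U)\<^sup>*"
  shows "und_connected N T U"
  unfolding und_connected_def
proof (intro ballI)
  fix a b assume "a \<in> U" "b \<in> U"
  then obtain ha hb where ha: "ha \<in> H" "(a, ha) \<in> (und_edges N T U)\<^sup>*"
    and hb: "hb \<in> H" "(b, hb) \<in> (und_edges N T U)\<^sup>*"
    using assms(3) by blast
  have "(ha, hb) \<in> (und_edges N T H)\<^sup>*"
    using assms(2) ha(1) hb(1) by (simp add: und_connected_def)
  then have "(ha, hb) \<in> (und_edges N T U)\<^sup>*"
    using assms(1) und_edges_rtrancl_mono by blast
  then show "(a, b) \<in> (und_edges N T U)\<^sup>*"
    using ha hb und_edges_rtrancl_sym by (meson rtrancl_trans)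
qed

lemma not_fE_iff:
  "\<not> fE N T {n} Y {k} \<longleftrightarrow> Y = {} \<or>
     (\<exists>u\<in>V N - {k}. (u, n) \<in> (arcs_in N T (V N - {k}))\<^sup>* \<and>
        (\<exists>y\<in>Y. (u, y) \<in> (arcs_in N T (V N - {k}))\<^sup>*))"
  by (auto simp: fE_def IN_def)

text \<open>Directed sub-blocks without the three-node bound, so that single nodes and single arcs
  qualify.\<close>

definition weak_subblock :: "nat \<Rightarrow> (nat \<Rightarrow> nat \<Rightarrow> real) \<Rightarrow> nat set \<Rightarrow> bool" where
  "weak_subblock N T U \<longleftrightarrow> U \<subseteq> V N \<and> (\<exists>r\<in>U. \<forall>v\<in>U. (v, r) \<in> (arcs_in N T U)\<^sup>*) \<and>
     und_connected N T U \<and> (\<forall>x\<in>U. und_connected N T (U - {x}))"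

lemma weak_subblock_subset: "weak_subblock N T U \<Longrightarrow> U \<subseteq> V N"
  by (simp add: weak_subblock_def)

lemma directed_subblock_iff_weak_subblock:
  "directed_subblock N T W \<longleftrightarrow> weak_subblock N T W \<and> 3 \<le> card W"
proof -
  have "W \<subseteq> V N \<Longrightarrow> finite W"
    using finite_V finite_subset by blast
  then show ?thesis
    unfolding directed_subblock_def weak_subblock_def und_biconnected_def by blast
qed

lemma und_connected_subset_singleton: "U \<subseteq> {a} \<Longrightarrow> und_connected N T U"
  by (auto simp: und_connected_def)

lemma weak_subblock_singleton: "a \<in> V N \<Longrightarrow> weak_subblock N T {a}"
  by (auto simp: weak_subblock_def und_connected_def)

lemma weak_subblock_arc:
  assumes "arc N T a b"
  shows "weak_subblock N T {a, b}"
proof -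
  have ab: "(a, b) \<in> arcs_in N T {a, b}" "(a, b) \<in> und_edges N T {a, b}" "(b, a) \<in> und_edges N T {a, b}"
    using assms by (auto simp: arcs_in_def und_edges_def)
  have "und_connected N T {a, b}"
    using ab(2,3) by (auto simp: und_connected_def)
  moreover have "\<forall>x\<in>{a, b}. und_connected N T ({a, b} - {x})"
    by (auto intro: und_connected_subset_singleton)
  moreover have "\<forall>v\<in>{a, b}. (v, b) \<in> (arcs_in N T {a, b})\<^sup>*"
    using ab(1) by auto
  moreover have "{a, b} \<subseteq> V N"
    using assms by (auto simp: arc_def)
  ultimately show ?thesis
    unfolding weak_subblock_def by blast
qed

definition ear :: "nat \<Rightarrow> (nat \<Rightarrow> nat \<Rightarrow> real) \<Rightarrow> nat set \<Rightarrow> nat \<Rightarrow> nat \<Rightarrow> nat set \<Rightarrow> bool" where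
  "ear N T U k n P \<longleftrightarrow> P \<subseteq> V N - U \<and> n \<in> P \<and>
     (\<forall>p\<in>P. \<exists>z\<in>U. (p, z) \<in> (arcs_in N T (P \<union> U))\<^sup>*) \<and>
     (\<forall>p\<in>P. \<exists>z\<in>U - {k}. (p, z) \<in> (und_edges N T (P \<union> (U - {k})))\<^sup>*)"

lemma arcs_in_rtrancl_between:
  assumes u: "u \<in> U" and ua: "(u, a) \<in> (arcs_in N T U)\<^sup>*" and ab: "(a, b) \<in> (arcs_in N T U)\<^sup>*"
    and b: "\<exists>t\<in>B. (b, t) \<in> (arcs_in N T U)\<^sup>*"
  shows "(a, b) \<in> (arcs_in N T {v \<in> U. (u, v) \<in> (arcs_in N T U)\<^sup>* \<and> (\<exists>t\<in>B. (v, t) \<in> (arcs_in N T U)\<^sup>*)})\<^sup>*"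
    (is "_ \<in> (arcs_in N T ?Q)\<^sup>*")
proof -
  have "(a, b) \<in> (arcs_in N T U \<inter> ?Q \<times> ?Q)\<^sup>*"
  proof (rule rtrancl_restrict_between[OF ab])
    fix v assume av: "(a, v) \<in> (arcs_in N T U)\<^sup>*" and vb: "(v, b) \<in> (arcs_in N T U)\<^sup>*"
    have uv: "(u, v) \<in> (arcs_in N T U)\<^sup>*" using ua av by simp
    moreover have "v \<in> U" using arcs_in_rtrancl_closed[OF uv u] .
    moreover have "\<exists>t\<in>B. (v, t) \<in> (arcs_in N T U)\<^sup>*" using vb b by (meson rtrancl_trans)
    ultimately show "v \<in> ?Q" by blast
  qed
  moreover have "U \<inter> ?Q = ?Q" by blast
  ultimately show ?thesis by (simp add: arcs_in_Int)
qed

text \<open>The ear consists of the nodes outside \<open>U\<close> on walks avoiding \<open>k\<close> from \<open>u\<close> to \<open>n\<close> or \<open>w\<close>.\<close>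

lemma ear_exists:
  assumes k: "k \<in> U" and w: "w \<in> U" "w \<noteq> k"
    and n: "n \<in> V N - U" and nk: "arc N T n k" and u: "u \<in> V N - {k}"
    and un: "(u, n) \<in> (arcs_in N T (V N - {k}))\<^sup>*"
    and uw: "(u, w) \<in> (arcs_in N T (V N - {k}))\<^sup>*"
  shows "\<exists>P. ear N T U k n P"
proof -
  let ?RK = "arcs_in N T (V N - {k})"
  define Q where "Q = {v \<in> V N - {k}. (u, v) \<in> ?RK\<^sup>* \<and> (\<exists>t\<in>{n, w}. (v, t) \<in> ?RK\<^sup>*)}"
  define P where "P = Q - U"
  have walk: "(a, b) \<in> (arcs_in N T Q)\<^sup>*"
    if "(u, a) \<in> ?RK\<^sup>*" "(a, b) \<in> ?RK\<^sup>*" "\<exists>t\<in>{n, w}. (b, t) \<in> ?RK\<^sup>*" for a b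
    unfolding Q_def by (rule arcs_in_rtrancl_between[OF u that])
  have QP: "Q \<subseteq> P \<union> (U - {k})"
    unfolding P_def Q_def by blast
  have nP: "n \<in> P"
    using n un k rtrancl_refl unfolding P_def Q_def by blast
  have drain: "\<exists>z\<in>U. (p, z) \<in> (arcs_in N T (P \<union> U))\<^sup>*" if p: "p \<in> P" for p
  proof -
    obtain t where up: "(u, p) \<in> ?RK\<^sup>*" and t: "t \<in> {n, w}" "(p, t) \<in> ?RK\<^sup>*"
      using p unfolding P_def Q_def by blast
    have "(p, t) \<in> (arcs_in N T Q)\<^sup>*"
      using walk[OF up t(2)] t(1) by blast
    then have pt: "(p, t) \<in> (arcs_in N T (P \<union> U))\<^sup>*"
      by (rule arcs_in_rtrancl_mono) (use QP in blast)
    show ?thesis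
    proof (cases "t = n")
      case True
      have "(n, k) \<in> arcs_in N T (P \<union> U)"
        using nk k nP by (auto simp: arcs_in_def)
      then show ?thesis using k pt True by (blast intro: rtrancl.rtrancl_into_rtrancl)
    next
      case False
      then show ?thesis using pt t(1) w(1) by blast
    qed
  qed
  have attached: "\<exists>z\<in>U - {k}. (p, z) \<in> (und_edges N T (P \<union> (U - {k})))\<^sup>*" if p: "p \<in> P" for p
  proof -
    have up: "(u, p) \<in> ?RK\<^sup>*" and pt: "\<exists>t\<in>{n, w}. (p, t) \<in> ?RK\<^sup>*"
      using p unfolding P_def Q_def by blast+
    have "(u, p) \<in> (und_edges N T (P \<union> (U - {k})))\<^sup>*"
      using walk[OF _ up pt] by (simp add: arcs_in_rtrancl_und_edges arcs_in_rtrancl_mono[OF _ QP])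
    moreover have "(u, w) \<in> (und_edges N T (P \<union> (U - {k})))\<^sup>*"
      using walk[OF _ uw] by (simp add: arcs_in_rtrancl_und_edges arcs_in_rtrancl_mono[OF _ QP])
    ultimately have "(p, w) \<in> (und_edges N T (P \<union> (U - {k})))\<^sup>*"
      by (rule rtrancl_trans[OF und_edges_rtrancl_sym])
    then show ?thesis using w by blast
  qed
  have "P \<subseteq> V N - U"
    unfolding P_def Q_def by blast
  then have "ear N T U k n P"
    unfolding ear_def using nP drain attached by (intro conjI ballI)
  then show ?thesis ..
qed

lemma ear_Diff_separated:
  assumes ear: "ear N T U k n P" and nk: "arc N T n k" and k: "k \<in> U"
    and C: "C \<subseteq> P" "x \<notin> C" "x \<noteq> k"
    and closed: "\<And>c y. c \<in> C \<Longrightarrow> y \<in> U \<union> P \<Longrightarrow> y \<noteq> x \<Longrightarrow> arc N T c y \<or> arc N T y c \<Longrightarrow> y \<in> C"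
  shows "ear N T U k n (P - C)"
proof -
  have PV: "P \<subseteq> V N - U" and nP: "n \<in> P"
    and drain: "\<forall>p\<in>P. \<exists>z\<in>U. (p, z) \<in> (arcs_in N T (P \<union> U))\<^sup>*"
    and attached: "\<forall>p\<in>P. \<exists>z\<in>U - {k}. (p, z) \<in> (und_edges N T (P \<union> (U - {k})))\<^sup>*"
    using ear unfolding ear_def by auto
  have "n \<notin> C"
  proof
    assume "n \<in> C"
    then have "k \<in> C" using closed[of n k] nk k C(3) by blast
    then show False using C(1) PV k by blast
  qed
  have CU: "C \<inter> U = {}" using C(1) PV by blast
  have drain': "\<exists>z\<in>U. (q, z) \<in> (arcs_in N T (P - C \<union> U))\<^sup>*" if q: "q \<in> P - C" for q
  proof -
    let ?E = "arcs_in N T (P \<union> U)"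
    obtain z where z: "z \<in> U" "(q, z) \<in> ?E\<^sup>*" using drain q by blast
    have "(q, z) \<in> (?E \<inter> (- C) \<times> (- C))\<^sup>*"
      by (rule rtrancl_bypass[OF z(2) _ _ C(2)])
        (use q z CU closed in \<open>auto simp: arcs_in_def\<close>)
    moreover have "?E \<inter> (- C) \<times> (- C) \<subseteq> arcs_in N T (P - C \<union> U)"
      by (auto simp: arcs_in_def)
    ultimately show ?thesis using z(1) rtrancl_mono by blast
  qed
  have attached': "\<exists>z\<in>U - {k}. (q, z) \<in> (und_edges N T (P - C \<union> (U - {k})))\<^sup>*" if q: "q \<in> P - C" for q
  proof -
    let ?E = "und_edges N T (P \<union> (U - {k}))"
    obtain z where z: "z \<in> U - {k}" "(q, z) \<in> ?E\<^sup>*" using attached q by blast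
    have "(q, z) \<in> (?E \<inter> (- C) \<times> (- C))\<^sup>*"
      by (rule rtrancl_bypass[OF z(2) _ _ C(2)])
        (use q z CU closed in \<open>auto simp: und_edges_def\<close>)
    moreover have "?E \<inter> (- C) \<times> (- C) \<subseteq> und_edges N T (P - C \<union> (U - {k}))"
      by (auto simp: und_edges_def)
    ultimately show ?thesis using z(1) rtrancl_mono by blast
  qed
  show ?thesis
    unfolding ear_def using PV nP \<open>n \<notin> C\<close> drain' attached' by blast
qed

lemma ear_finite: "ear N T U k n P \<Longrightarrow> finite P"
  unfolding ear_def using finite_V by (meson finite_Diff finite_subset)

lemma ear_und_connected_Diff:
  assumes U: "weak_subblock N T U" and k: "k \<in> U" and ear: "ear N T U k n P"
  shows "und_connected N T (P \<union> (U - {k}))"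
proof (rule und_connected_attach[of "U - {k}"])
  show "und_connected N T (U - {k})"
    using U k by (simp add: weak_subblock_def)
  show "\<exists>h\<in>U - {k}. (a, h) \<in> (und_edges N T (P \<union> (U - {k})))\<^sup>*"
    if "a \<in> P \<union> (U - {k})" for a
    using that ear unfolding ear_def by blast
qed blast

text \<open>A node of the ear cut off from \<open>U - {x}\<close> would lie in a component of \<open>U \<union> P - {x}\<close>
  inside \<open>P\<close>; removing that component leaves a smaller ear.\<close>

lemma minimal_ear_und_connected_Diff:
  assumes U: "weak_subblock N T U" and k: "k \<in> U" and nk: "arc N T n k"
    and ear: "ear N T U k n P" and minimal: "\<And>P'. ear N T U k n P' \<Longrightarrow> card P \<le> card P'"
    and x: "x \<in> U \<union> P"
  shows "und_connected N T (U \<union> P - {x})"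
proof (cases "x = k")
  case True
  have "U \<union> P - {x} = P \<union> (U - {k})"
    using True ear k unfolding ear_def by blast
  then show ?thesis
    using ear_und_connected_Diff[OF U k ear] by simp
next
  case False
  have H: "und_connected N T (U - {x})"
    using U by (cases "x \<in> U") (auto simp: weak_subblock_def)
  show ?thesis
  proof (rule und_connected_attach[OF _ H])
    fix p assume p: "p \<in> U \<union> P - {x}"
    show "\<exists>h\<in>U - {x}. (p, h) \<in> (und_edges N T (U \<union> P - {x}))\<^sup>*"
    proof (rule ccontr)
      assume unattached: "\<not> ?thesis"
      define C where "C = {c. (p, c) \<in> (und_edges N T (U \<union> P - {x}))\<^sup>*}"
      have C_sub: "C \<subseteq> U \<union> P - {x}"
        using und_edges_rtrancl_closed p unfolding C_def by blast
      have "C \<inter> U = {}"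
        using unattached C_sub unfolding C_def by blast
      then have "C \<subseteq> P" "x \<notin> C"
        using C_sub by blast+
      moreover have "y \<in> C" if "c \<in> C" "y \<in> U \<union> P" "y \<noteq> x" "arc N T c y \<or> arc N T y c" for c y
      proof -
        have "(c, y) \<in> und_edges N T (U \<union> P - {x})"
          using that C_sub by (auto simp: und_edges_def)
        then show ?thesis
          using that(1) unfolding C_def by (blast intro: rtrancl_into_rtrancl)
      qed
      ultimately have "ear N T U k n (P - C)"
        using ear_Diff_separated[OF ear nk k] False by blast
      moreover have "p \<in> C" "p \<in> P"
        using p \<open>C \<inter> U = {}\<close> unfolding C_def by auto
      then have "card (P - C) < card P"
        using ear_finite[OF ear] by (intro psubset_card_mono) auto
      ultimately show False
        using minimal leD by blast
    qed
  qed blast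
qed

lemma ear_Un_rooted:
  assumes ear: "ear N T U k n P" and rooted: "\<forall>v\<in>U. (v, r) \<in> (arcs_in N T U)\<^sup>*"
    and v: "v \<in> U \<union> P"
  shows "(v, r) \<in> (arcs_in N T (U \<union> P))\<^sup>*"
proof (cases "v \<in> U")
  case True
  then have "(v, r) \<in> (arcs_in N T U)\<^sup>*" using rooted by blast
  then show ?thesis by (rule arcs_in_rtrancl_mono) blast
next
  case False
  with v have "v \<in> P" by blast
  then obtain z where "z \<in> U" "(v, z) \<in> (arcs_in N T (P \<union> U))\<^sup>*"
    using ear unfolding ear_def by blast
  moreover have "(z, r) \<in> (arcs_in N T U)\<^sup>*" using rooted \<open>z \<in> U\<close> by blast
  then have "(z, r) \<in> (arcs_in N T (P \<union> U))\<^sup>*" by (rule arcs_in_rtrancl_mono) blast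
  ultimately show ?thesis by (simp add: sup_commute)
qed

lemma minimal_ear_directed_subblock:
  assumes U: "weak_subblock N T U" and k: "k \<in> U" and w: "w \<in> U" "w \<noteq> k" and nk: "arc N T n k"
    and ear: "ear N T U k n P" and minimal: "\<And>P'. ear N T U k n P' \<Longrightarrow> card P \<le> card P'"
  shows "directed_subblock N T (U \<union> P)"
proof -
  obtain r where r: "r \<in> U" "\<forall>v\<in>U. (v, r) \<in> (arcs_in N T U)\<^sup>*"
    using U unfolding weak_subblock_def by blast
  have PV: "P \<subseteq> V N - U" and nP: "n \<in> P"
    using ear unfolding ear_def by blast+
  have rooted: "(v, r) \<in> (arcs_in N T (U \<union> P))\<^sup>*" if "v \<in> U \<union> P" for v
    using ear_Un_rooted[OF ear r(2) that] .
  have connected: "und_connected N T (U \<union> P)"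
  proof (rule und_connected_attach[of U])
    show "und_connected N T U" using U by (simp add: weak_subblock_def)
    fix a assume "a \<in> U \<union> P"
    then show "\<exists>h\<in>U. (a, h) \<in> (und_edges N T (U \<union> P))\<^sup>*"
      using rooted r(1) arcs_in_rtrancl_und_edges by blast
  qed blast
  have UPV: "U \<union> P \<subseteq> V N"
    using weak_subblock_subset[OF U] PV by blast
  have "n \<notin> U"
    using nP PV by blast
  then have "card {k, w, n} = 3"
    using k w by (auto simp: card_insert_if)
  moreover have "card {k, w, n} \<le> card (U \<union> P)"
    by (rule card_mono[OF finite_subset[OF UPV finite_V]]) (use k w nP in blast)
  ultimately have "3 \<le> card (U \<union> P)"
    by simp
  moreover have "weak_subblock N T (U \<union> P)"
    unfolding weak_subblock_def
  proof (intro conjI)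
    show "\<exists>r\<in>U \<union> P. \<forall>v\<in>U \<union> P. (v, r) \<in> (arcs_in N T (U \<union> P))\<^sup>*"
      using r(1) rooted by blast
    show "\<forall>x\<in>U \<union> P. und_connected N T (U \<union> P - {x})"
      using minimal_ear_und_connected_Diff[OF U k nk ear minimal] by (intro ballI)
  qed (fact UPV connected)+
  ultimately show ?thesis
    by (simp add: directed_subblock_iff_weak_subblock)
qed

lemma weak_subblock_ear_extension:
  assumes U: "weak_subblock N T U" and k: "k \<in> U" and w: "w \<in> U" "w \<noteq> k"
    and n: "n \<in> V N - U" and nk: "arc N T n k" and u: "u \<in> V N - {k}"
    and un: "(u, n) \<in> (arcs_in N T (V N - {k}))\<^sup>*"
    and uw: "(u, w) \<in> (arcs_in N T (V N - {k}))\<^sup>*"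
  shows "\<exists>U'. directed_subblock N T U' \<and> insert n U \<subseteq> U'"
proof -
  have "\<exists>P. ear N T U k n P"
    using ear_exists k w n nk u un uw by blast
  then obtain P where ear: "ear N T U k n P" and minimal: "\<And>P'. ear N T U k n P' \<Longrightarrow> card P \<le> card P'"
    using ex_has_least_nat[where m = card] by metis
  have "directed_subblock N T (U \<union> P)"
    by (rule minimal_ear_directed_subblock[OF U k w nk ear minimal])
  moreover have "insert n U \<subseteq> U \<union> P"
    using ear by (auto simp: ear_def)
  ultimately show ?thesis by blast
qed

lemma weak_subblock_insert:
  assumes U: "weak_subblock N T U" and D: "D \<subseteq> U" "k \<in> D" and n: "n \<in> V N" "n \<notin> D"
    and nk: "arc N T n k" and not_fE: "\<not> fE N T {n} (D - {k}) {k}"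
  shows "\<exists>U'. weak_subblock N T U' \<and> insert n D \<subseteq> U'"
proof -
  consider "n \<in> U" | "D - {k} = {}" | "n \<notin> U" "\<exists>u\<in>V N - {k}. (u, n) \<in> (arcs_in N T (V N - {k}))\<^sup>* \<and>
      (\<exists>w\<in>D - {k}. (u, w) \<in> (arcs_in N T (V N - {k}))\<^sup>*)"
    using not_fE unfolding not_fE_iff by blast
  then show ?thesis
  proof cases
    case 1
    then show ?thesis using U D by blast
  next
    case 2
    then have "insert n D = {n, k}" using D(2) by blast
    then show ?thesis using weak_subblock_arc[OF nk] by auto
  next
    case 3
    then obtain u w where u: "u \<in> V N - {k}" "(u, n) \<in> (arcs_in N T (V N - {k}))\<^sup>*"
      and w: "w \<in> D - {k}" "(u, w) \<in> (arcs_in N T (V N - {k}))\<^sup>*"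
      by blast
    have "\<exists>U'. directed_subblock N T U' \<and> insert n U \<subseteq> U'"
      by (rule weak_subblock_ear_extension[OF U _ _ _ _ nk u(1,2) w(2)])
        (use D w n 3 in auto)
    then show ?thesis
      using D unfolding directed_subblock_iff_weak_subblock by blast
  qed
qed

lemma ran_upd_subset: "ran m \<subseteq> A \<Longrightarrow> x \<in> A \<Longrightarrow> ran (m(k \<mapsto> x)) \<subseteq> A"
  by (auto simp: ran_def)

lemma ME_ran: "\<psi> \<in> ME N T \<Longrightarrow> ran \<psi> \<subseteq> {S, I}"
proof (induction rule: ME.induct)
  case (induce \<psi> \<phi>)
  from induce.hyps(3) consider "\<phi> = \<psi>" | k where "\<phi> = \<psi>(k \<mapsto> S)"
    | k n where "\<phi> = \<psi>(k \<mapsto> S, n \<mapsto> I)" | k n where "\<phi> = [k \<mapsto> S, n \<mapsto> I]"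
    | k where "\<phi> = [k \<mapsto> S]"
    unfolding induced_def by blast
  then show ?case
    by cases (metis induce.hyps(2) ran_upd_subset ran_empty empty_subsetI insertI1 insertI2)+
qed (simp_all add: ran_def)

lemma dom_induced:
  assumes "\<phi> \<in> induced N T \<psi>"
  obtains (same) "dom \<phi> = dom \<psi>"
  | (extend) k n where "k \<in> dom \<psi>" "n \<in> V N - dom \<psi>" "T k n > 0"
      "\<not> fE N T {n} (dom \<psi> - {k}) {k}" "dom \<phi> = insert n (dom \<psi>)"
  | (pair) k n where "k \<in> dom \<psi>" "n \<in> V N" "T k n > 0" "dom \<phi> = {n, k}"
  | (single) k where "k \<in> dom \<psi>" "dom \<phi> = {k}"
proof -
  from assms consider "\<phi> = \<psi>" | k where "\<phi> = \<psi>(k \<mapsto> S)" "k \<in> dom \<psi>"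
    | k n where "\<phi> = \<psi>(k \<mapsto> S, n \<mapsto> I)" "k \<in> dom \<psi>" "n \<in> V N - dom \<psi>" "T k n > 0"
        "\<not> fE N T {n} (dom \<psi> - {k}) {k}"
    | k n where "\<phi> = [k \<mapsto> S, n \<mapsto> I]" "k \<in> dom \<psi>" "n \<in> V N" "T k n > 0"
    | k where "\<phi> = [k \<mapsto> S]" "k \<in> dom \<psi>"
    unfolding induced_def by blast
  then show thesis
  proof cases
    case (3 k n)
    then show thesis using extend[of k n] by (simp add: insert_absorb)
  next
    case (4 k n)
    then show thesis using pair[of k n] by auto
  qed (use same single in \<open>simp_all add: insert_absorb\<close>)
qed

lemma ME_dom_subset_weak_subblock:
  "\<psi> \<in> ME N T \<Longrightarrow> \<exists>U. weak_subblock N T U \<and> dom \<psi> \<subseteq> U"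
proof (induction rule: ME.induct)
  case (single_S i)
  then show ?case using weak_subblock_singleton[OF single_S] by (intro exI[of _ "{i}"]) (simp add: dom_def)
next
  case (single_I i)
  then show ?case using weak_subblock_singleton[OF single_I] by (intro exI[of _ "{i}"]) (simp add: dom_def)
next
  case (induce \<psi> \<phi>)
  obtain U where U: "weak_subblock N T U" "dom \<psi> \<subseteq> U"
    using induce.IH by blast
  have arc: "arc N T n k" if "k \<in> dom \<psi>" "n \<in> V N" "T k n > 0" for k n
    using that U weak_subblock_subset[OF U(1)] by (auto simp: arc_def)
  from induce.hyps(3) show ?case
  proof (cases rule: dom_induced)
    case same
    then show ?thesis using U by auto
  next
    case (extend k n)
    then show ?thesis
      using weak_subblock_insert[OF U(1) U(2) extend(1)] arc[OF extend(1)] by auto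
  next
    case (pair k n)
    then show ?thesis using weak_subblock_arc[OF arc[OF pair(1-3)]] by auto
  next
    case (single k)
    then show ?thesis using weak_subblock_singleton weak_subblock_subset[OF U(1)] U(2) by blast
  qed
qed

lemma directed_subblock_in_transmission_block:
  assumes "directed_subblock N T U"
  obtains W where "U \<subseteq> W" "transmission_block N T W"
proof -
  let ?A = "{W. U \<subseteq> W \<and> directed_subblock N T W}"
  have "?A \<subseteq> Pow (V N)"
    unfolding directed_subblock_def by blast
  then have "finite ?A"
    using finite_V by (meson finite_Pow_iff finite_subset)
  moreover have "?A \<noteq> {}"
    using assms by blast
  ultimately obtain W where W: "W \<in> ?A" "\<forall>W'\<in>?A. W \<le> W' \<longrightarrow> W = W'"
    by (meson finite_has_maximal)
  then have "transmission_block N T W"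
    unfolding transmission_block_def by auto
  then show thesis
    using that W(1) by blast
qed

lemma rtrancl_arcs_in_exit:
  assumes "(a, b) \<in> (arcs_in N T W)\<^sup>*" "b \<in> X" "a \<in> W - X"
  shows "\<exists>n\<in>W - X. \<exists>x\<in>X. (a, n) \<in> (arcs_in N T (W - X))\<^sup>* \<and> arc N T n x"
  using assms
proof (induction rule: converse_rtrancl_induct)
  case base
  then show ?case by blast
next
  case (step y z)
  show ?case
  proof (cases "z \<in> X")
    case True
    then show ?thesis using step.hyps(1) step.prems(2) by (auto simp: arcs_in_def)
  next
    case False
    then have "z \<in> W - X" "(y, z) \<in> arcs_in N T (W - X)"
      using step.hyps(1) step.prems(2) by (auto simp: arcs_in_def)
    then show ?thesis
      using step.IH[OF step.prems(1)] by (meson converse_rtrancl_into_rtrancl)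
  qed
qed

definition basin :: "nat \<Rightarrow> (nat \<Rightarrow> nat \<Rightarrow> real) \<Rightarrow> nat set \<Rightarrow> nat set \<Rightarrow> nat \<Rightarrow> nat set" where
  "basin N T W X k = {y \<in> W - X. \<exists>n\<in>W - X. (y, n) \<in> (arcs_in N T (W - X))\<^sup>* \<and> arc N T n k}"

lemma basin_no_common_ancestor:
  assumes WV: "W \<subseteq> V N" and k: "k \<in> X"
    and blocked: "\<And>n. n \<in> W - X \<Longrightarrow> arc N T n k \<Longrightarrow> fE N T {n} (X - {k}) {k}"
    and c: "c \<in> basin N T W X k"
    and u: "u \<in> V N - {k}" "(u, c) \<in> (arcs_in N T (V N - {k}))\<^sup>*"
    and z: "z \<in> X - {k}" "(u, z) \<in> (arcs_in N T (V N - {k}))\<^sup>*"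
  shows False
proof -
  obtain n where n: "n \<in> W - X" "(c, n) \<in> (arcs_in N T (W - X))\<^sup>*" "arc N T n k"
    using c unfolding basin_def by blast
  have "(c, n) \<in> (arcs_in N T (V N - {k}))\<^sup>*"
    by (rule arcs_in_rtrancl_mono[OF n(2)]) (use WV k in blast)
  with u(2) have "(u, n) \<in> (arcs_in N T (V N - {k}))\<^sup>*"
    by (rule rtrancl_trans)
  then have "\<not> fE N T {n} (X - {k}) {k}"
    unfolding not_fE_iff using u(1) z by blast
  then show False
    using blocked[OF n(1,3)] by contradiction
qed

text \<open>A neighbour \<open>y\<close> of the basin cannot lie in \<open>X - {k}\<close>: the tail of the edge would be a common
  ancestor as excluded above. Outside \<open>X\<close>, \<open>y\<close> drains towards the root into \<open>X\<close>, and for the same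
  reason it must enter \<open>X\<close> at \<open>k\<close>.\<close>

lemma basin_und_edge_closed:
  assumes WV: "W \<subseteq> V N" and rooted: "\<forall>v\<in>W. (v, r) \<in> (arcs_in N T W)\<^sup>*"
    and X: "X \<subseteq> W" "r \<in> X" "k \<in> X"
    and blocked: "\<And>n. n \<in> W - X \<Longrightarrow> arc N T n k \<Longrightarrow> fE N T {n} (X - {k}) {k}"
    and c: "c \<in> basin N T W X k" and cy: "(c, y) \<in> und_edges N T (W - {k})"
  shows "y \<in> basin N T W X k"
proof -
  let ?RK = "arcs_in N T (V N - {k})"
  let ?RX = "arcs_in N T (W - X)"
  have no_common: False
    if "u \<in> V N - {k}" "(u, c) \<in> ?RK\<^sup>*" "z \<in> X - {k}" "(u, z) \<in> ?RK\<^sup>*" for u z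
    using basin_no_common_ancestor[OF WV X(3) blocked c that] .
  have cX: "c \<in> W - X"
    using c unfolding basin_def by blast
  have cV: "c \<in> V N - {k}" and yV: "y \<in> V N - {k}" and yW: "y \<in> W - {k}"
    using cX cy WV X(3) by (auto simp: und_edges_def)
  have arc_cy: "arc N T c y \<or> arc N T y c"
    using cy by (simp add: und_edges_def)
  show ?thesis
  proof (cases "y \<in> X")
    case True
    obtain u where "u \<in> {c, y}" "(u, c) \<in> ?RK\<^sup>*" "(u, y) \<in> ?RK\<^sup>*"
      using arc_cy cV yV by (auto simp: arcs_in_def)
    then show ?thesis
      using no_common[of u y] cV yV yW True by blast
  next
    case False
    then have yX: "y \<in> W - X" using yW by blast
    from arc_cy show ?thesis
    proof (elim disjE)
      assume "arc N T y c"
      then have "(y, c) \<in> ?RX" using cX yX by (auto simp: arcs_in_def)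
      with c show ?thesis
        unfolding basin_def using yX by (blast intro: converse_rtrancl_into_rtrancl)
    next
      assume "arc N T c y"
      then have cy_RK: "(c, y) \<in> ?RK" using cV yV by (auto simp: arcs_in_def)
      obtain n x where n: "n \<in> W - X" "x \<in> X" "(y, n) \<in> ?RX\<^sup>*" "arc N T n x"
        using rtrancl_arcs_in_exit[OF rooted[rule_format] X(2)] yX by blast
      show ?thesis
      proof (cases "x = k")
        case True
        then show ?thesis using yX n unfolding basin_def by blast
      next
        case False
        have "(y, n) \<in> ?RK\<^sup>*"
          by (rule arcs_in_rtrancl_mono[OF n(3)]) (use WV X(3) in blast)
        moreover have "(n, x) \<in> ?RK"
          using n(1,2,4) False WV X(1,3) by (auto simp: arcs_in_def)
        ultimately have "(c, x) \<in> ?RK\<^sup>*"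
          using cy_RK by (meson converse_rtrancl_into_rtrancl rtrancl.rtrancl_into_rtrancl)
        then show ?thesis using no_common[OF cV rtrancl_refl] n(2) False by blast
      qed
    qed
  qed
qed

lemma weak_subblock_grow:
  assumes W: "weak_subblock N T W" and rooted: "\<forall>v\<in>W. (v, r) \<in> (arcs_in N T W)\<^sup>*"
    and X: "X \<subseteq> W" "r \<in> X" "X \<noteq> W"
  shows "\<exists>k\<in>X. \<exists>n\<in>W - X. arc N T n k \<and> \<not> fE N T {n} (X - {k}) {k}"
proof (rule ccontr)
  assume "\<not> ?thesis"
  then have blocked: "fE N T {n} (X - {k}) {k}" if "k \<in> X" "n \<in> W - X" "arc N T n k" for k n
    using that by blast
  obtain y0 where y0: "y0 \<in> W - X"
    using X by blast
  then obtain n0 k where nk0: "n0 \<in> W - X" "k \<in> X" "(y0, n0) \<in> (arcs_in N T (W - X))\<^sup>*"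
    "arc N T n0 k"
    using rtrancl_arcs_in_exit[OF rooted[rule_format] X(2)] by blast
  then have y0_basin: "y0 \<in> basin N T W X k"
    using y0 unfolding basin_def by blast
  obtain z where z: "z \<in> X - {k}"
    using blocked[OF nk0(2,1,4)] unfolding fE_def by blast
  have "und_connected N T (W - {k})"
    using W nk0(2) X(1) unfolding weak_subblock_def by blast
  then have "(y0, z) \<in> (und_edges N T (W - {k}))\<^sup>*"
    using y0 z X(1) nk0(2) unfolding und_connected_def by blast
  then have "z \<in> basin N T W X k"
  proof (induction rule: rtrancl_induct)
    case base
    show ?case by (fact y0_basin)
  next
    case (step a b)
    show ?case
      by (rule basin_und_edge_closed[OF weak_subblock_subset[OF W] rooted X(1,2) nk0(2) _ step.IH step.hyps(2)])
        (rule blocked[OF nk0(2)])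
  qed
  then show False
    using z unfolding basin_def by blast
qed

lemma ME_extend:
  assumes "\<psi> \<in> ME N T" "k \<in> dom \<psi>" "n \<in> V N - dom \<psi>" "T k n > 0"
    "\<not> fE N T {n} (dom \<psi> - {k}) {k}"
  shows "\<psi>(k \<mapsto> S, n \<mapsto> I) \<in> ME N T"
proof (rule ME.induce[OF assms(1) ME_ran[OF assms(1)]])
  show "\<psi>(k \<mapsto> S, n \<mapsto> I) \<in> induced N T \<psi>"
    unfolding induced_def using assms(2-5) by blast
qed

lemma weak_subblock_dom_ME:
  assumes W: "weak_subblock N T W"
  shows "\<exists>\<psi>\<in>ME N T. dom \<psi> = W"
proof -
  obtain r where r: "r \<in> W" and rooted: "\<forall>v\<in>W. (v, r) \<in> (arcs_in N T W)\<^sup>*"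
    using W unfolding weak_subblock_def by blast
  have WV: "W \<subseteq> V N" and finW: "finite W"
    using weak_subblock_subset[OF W] finite_V finite_subset by blast+
  define grown where "grown \<psi> \<longleftrightarrow> \<psi> \<in> ME N T \<and> r \<in> dom \<psi> \<and> dom \<psi> \<subseteq> W" for \<psi>
  have "grown [r \<mapsto> S]"
    using r WV ME.single_S[of r N T] unfolding grown_def by auto
  moreover have "\<forall>\<psi>. grown \<psi> \<longrightarrow> card (dom \<psi>) < Suc (card W)"
    unfolding grown_def using card_mono[OF finW] by (simp add: le_imp_less_Suc)
  ultimately obtain \<psi> where \<psi>: "grown \<psi>" and largest: "\<And>\<phi>. grown \<phi> \<Longrightarrow> card (dom \<phi>) \<le> card (dom \<psi>)"
    using Lattices_Big.ex_has_greatest_nat[of grown _ "\<lambda>\<psi>. card (dom \<psi>)"] by metis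
  have "dom \<psi> = W"
  proof (rule ccontr)
    assume "dom \<psi> \<noteq> W"
    moreover have "dom \<psi> \<subseteq> W" "r \<in> dom \<psi>"
      using \<psi> unfolding grown_def by blast+
    ultimately obtain k n where kn: "k \<in> dom \<psi>" "n \<in> W - dom \<psi>" "arc N T n k"
      "\<not> fE N T {n} (dom \<psi> - {k}) {k}"
      using weak_subblock_grow[OF W rooted] by meson
    have "\<psi>(k \<mapsto> S, n \<mapsto> I) \<in> ME N T"
      using ME_extend[of \<psi> N T k n] \<psi> kn WV unfolding grown_def arc_def by blast
    then have "grown (\<psi>(k \<mapsto> S, n \<mapsto> I))"
      using \<psi> kn unfolding grown_def by auto
    moreover have "card (dom (\<psi>(k \<mapsto> S, n \<mapsto> I))) = Suc (card (dom \<psi>))"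
      using kn finite_subset[OF _ finW] \<psi> unfolding grown_def by (simp add: insert_absorb)
    ultimately show False
      using largest by fastforce
  qed
  then show ?thesis
    using \<psi> unfolding grown_def by blast
qed

lemma Max_eq_if_dominated:
  fixes A B :: "'a::linorder set"
  assumes "finite A" "B \<subseteq> A" "B \<noteq> {}" "\<And>a. a \<in> A \<Longrightarrow> \<exists>b\<in>B. a \<le> b"
  shows "Max A = Max B"
proof (rule antisym)
  show "Max A \<le> Max B"
  proof (rule Max.boundedI)
    show "finite A" "A \<noteq> {}"
      using assms(1-3) by auto
    fix a assume "a \<in> A"
    then obtain b where "b \<in> B" "a \<le> b"
      using assms(4) by blast
    moreover have "b \<le> Max B"
      using \<open>b \<in> B\<close> finite_subset[OF assms(2,1)] by simp
    ultimately show "a \<le> Max B"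
      by simp
  qed
  show "Max B \<le> Max A"
    by (rule Max_mono[OF assms(2,3,1)])
qed

lemma finite_dom_ME: "finite (dom ` ME N T)"
proof (rule finite_subset)
  show "dom ` ME N T \<subseteq> Pow (V N)"
    using ME_dom_subset_weak_subblock weak_subblock_subset by blast
qed (simp add: finite_V)

lemma finite_weak_subblocks: "finite (Collect (weak_subblock N T))"
proof (rule finite_subset)
  show "Collect (weak_subblock N T) \<subseteq> Pow (V N)"
    using weak_subblock_subset by blast
qed (simp add: finite_V)

lemma Max_card_dom_ME:
  assumes "V N \<noteq> {}"
  shows "Max (card ` dom ` ME N T) = Max (card ` Collect (weak_subblock N T))"
proof (rule Max_eq_if_dominated)
  show "finite (card ` dom ` ME N T)"
    using finite_dom_ME by (rule finite_imageI)
  have "Collect (weak_subblock N T) \<subseteq> dom ` ME N T"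
  proof
    fix W assume "W \<in> Collect (weak_subblock N T)"
    then obtain \<psi> where "\<psi> \<in> ME N T" "dom \<psi> = W"
      using weak_subblock_dom_ME by blast
    then show "W \<in> dom ` ME N T" by blast
  qed
  then show "card ` Collect (weak_subblock N T) \<subseteq> card ` dom ` ME N T"
    by (rule image_mono)
  obtain a where "a \<in> V N"
    using assms by blast
  then show "card ` Collect (weak_subblock N T) \<noteq> {}"
    using weak_subblock_singleton by blast
  fix c assume "c \<in> card ` dom ` ME N T"
  then obtain \<psi> where "\<psi> \<in> ME N T" "c = card (dom \<psi>)"
    by blast
  moreover obtain U where U: "weak_subblock N T U" "dom \<psi> \<subseteq> U"
    using ME_dom_subset_weak_subblock[OF \<open>\<psi> \<in> ME N T\<close>] by blast
  moreover have "finite U"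
    using weak_subblock_subset[OF U(1)] finite_V finite_subset by blast
  ultimately show "\<exists>b\<in>card ` Collect (weak_subblock N T). c \<le> b"
    using card_mono by blast
qed

lemma weak_subblock_card_le_transmission_block:
  assumes "weak_subblock N T U" "3 \<le> card U"
  shows "\<exists>W. transmission_block N T W \<and> card U \<le> card W"
proof -
  have "directed_subblock N T U"
    using assms by (simp add: directed_subblock_iff_weak_subblock)
  then obtain W where "U \<subseteq> W" "transmission_block N T W"
    by (rule directed_subblock_in_transmission_block)
  moreover have "finite W"
    using \<open>transmission_block N T W\<close> finite_V finite_subset
    unfolding transmission_block_def directed_subblock_def by blast
  ultimately show ?thesis
    using card_mono by blast
qed

lemma Max_card_weak_subblock:
  assumes "arc N T a b" "a \<noteq> b"
  shows "Max (card ` Collect (weak_subblock N T)) =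
           (if \<exists>W. transmission_block N T W
            then Max (card ` {W. transmission_block N T W})
            else 2)"
proof -
  let ?B = "card ` Collect (weak_subblock N T)"
  have finB: "finite ?B"
    using finite_weak_subblocks by (rule finite_imageI)
  have "2 \<in> ?B"
    using weak_subblock_arc[OF assms(1)] assms(2) by force
  show ?thesis
  proof (cases "\<exists>W. transmission_block N T W")
    case True
    then obtain W0 where W0: "transmission_block N T W0" by blast
    then have "3 \<le> card W0"
      unfolding transmission_block_def directed_subblock_iff_weak_subblock by blast
    have "Max ?B = Max (card ` {W. transmission_block N T W})"
    proof (rule Max_eq_if_dominated[OF finB])
      show "card ` {W. transmission_block N T W} \<subseteq> ?B"
        unfolding transmission_block_def directed_subblock_iff_weak_subblock by blast
      show "card ` {W. transmission_block N T W} \<noteq> {}"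
        using W0 by blast
      fix c assume "c \<in> ?B"
      then obtain U where "c = card U" "weak_subblock N T U" by blast
      then show "\<exists>d\<in>card ` {W. transmission_block N T W}. c \<le> d"
        using weak_subblock_card_le_transmission_block[of N T U] W0 \<open>3 \<le> card W0\<close> by (cases "3 \<le> card U") force+
    qed
    then show ?thesis using True by simp
  next
    case False
    have "Max ?B = 2"
    proof (rule Max_eqI[OF finB _ \<open>2 \<in> ?B\<close>])
      fix c assume "c \<in> ?B"
      then obtain U where "c = card U" "weak_subblock N T U" by blast
      then show "c \<le> 2"
        using weak_subblock_card_le_transmission_block[of N T U] False by fastforce
    qed
    then show ?thesis using False by simp
  qed
qed

theorem theorem4:
  fixes N :: nat and T :: "nat \<Rightarrow> nat \<Rightarrow> real"
  assumes nonneg: "\<forall>i\<in>V N. \<forall>j\<in>V N. T i j \<ge> 0"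
    and diag: "\<forall>i\<in>V N. T i i = 0"
    and has_arc: "\<exists>i\<in>V N. \<exists>j\<in>V N. T i j > 0"
  shows "Max (card ` dom ` ME N T) =
           (if \<exists>W. transmission_block N T W
            then Max (card ` {W. transmission_block N T W})
            else 2)"
proof -
  obtain i j where ij: "i \<in> V N" "j \<in> V N" "T i j > 0"
    using has_arc by blast
  then have "arc N T j i" "j \<noteq> i"
    using diag by (auto simp: arc_def)
  have "Max (card ` dom ` ME N T) = Max (card ` Collect (weak_subblock N T))"
    by (rule Max_card_dom_ME) (use ij(1) in blast)
  also have "\<dots> = (if \<exists>W. transmission_block N T W
                     then Max (card ` {W. transmission_block N T W}) else 2)"
    by (rule Max_card_weak_subblock) fact+
  finally show ?thesis .
qed

end
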